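(* Let $M$ be an $R$-module and $S=R\setminus W_R(M)$. (a) If $S^{-1}R=R$, then $M$ satisfies the dual of proper strong Property $\mathcal{A}$ if and only if $M$ satisfies the dual of Property $\mathcal{A}$. (b) If $S^{-1}R\neq R$, then $M$ satisfies the dual of proper strong Property $\mathcal{A}$ if and only if $M$ satisfies the dual of strong Property $\mathcal{A}$.
   Context: All rings are commutative with identity. For an $R$-module $M$, $W_R(M)=\{r\in R : rM\neq M\}$. $M$ satisfies the dual of Property $\mathcal{A}$ if for every finitely generated ideal $I$ of $R$ with $I\subseteq W_R(M)$ we have $IM\neq M$. $M$ satisfies the dual of proper strong Property $\mathcal{A}$ if for every proper finitely generated ideal $I=\langle a_1,\dots,a_n\rangle$ of $R$ with $a_i\in W_R(M)$ for all $i$, we have $IM\neq M$. A proper submodule $L$ of $M$ is completely irreducible if whenever $L=\bigcap_{i\in I}L_i$ for a family $\{L_i\}$ of submodules, then $L=L_i$ for some $i$. $M$ satisfies the dual of strong Property $\mathcal{A}$ if for any $a_1,\dots,a_n\in W_R(M)$ there is a completely irreducible submodule $L$ of $M$ with $a_iM\subseteq L\neq M$ for all $i$. For a multiplicatively closed set $S$, "$S^{-1}R=R$" means that the canonical map $R\to S^{-1}R$ is an isomorphism (equivalently every element of $S$ is a unit of $R$). *)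

theory Defs
  imports Complex_Main
begin

text \<open>An R-module M is modelled by a scalar multiplication
  scale :: 'r::comm_ring_1 => 'm::ab_group_add satisfying the locale module.\<close>

definition W_R :: "('r::comm_ring_1 \<Rightarrow> 'm::ab_group_add \<Rightarrow> 'm) \<Rightarrow> 'r set" where
  "W_R scale = {r. range (scale r) \<noteq> UNIV}"

definition gen_ideal :: "'r::comm_ring_1 set \<Rightarrow> 'r set" where
  "gen_ideal A = module.span ((*)) A"

definition ideal_mult :: "('r::comm_ring_1 \<Rightarrow> 'm::ab_group_add \<Rightarrow> 'm) \<Rightarrow> 'r set \<Rightarrow> 'm set" where
  "ideal_mult scale I = module.span scale {scale a m | a m. a \<in> I}"

definition completely_irreducible :: "('r::comm_ring_1 \<Rightarrow> 'm::ab_group_add \<Rightarrow> 'm) \<Rightarrow> 'm set \<Rightarrow> bool" where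
  "completely_irreducible scale L \<longleftrightarrow>
     module.subspace scale L \<and> L \<noteq> UNIV \<and>
     (\<forall>F. (\<forall>X\<in>F. module.subspace scale X) \<and> L = \<Inter>F \<longrightarrow> L \<in> F)"

definition dual_property_A :: "('r::comm_ring_1 \<Rightarrow> 'm::ab_group_add \<Rightarrow> 'm) \<Rightarrow> bool" where
  "dual_property_A scale \<longleftrightarrow>
     (\<forall>A. finite A \<and> gen_ideal A \<subseteq> W_R scale \<longrightarrow> ideal_mult scale (gen_ideal A) \<noteq> UNIV)"

definition dual_proper_strong_property_A :: "('r::comm_ring_1 \<Rightarrow> 'm::ab_group_add \<Rightarrow> 'm) \<Rightarrow> bool" where
  "dual_proper_strong_property_A scale \<longleftrightarrow>
     (\<forall>A. finite A \<and> A \<noteq> {} \<and> A \<subseteq> W_R scale \<and> gen_ideal A \<noteq> UNIV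
          \<longrightarrow> ideal_mult scale (gen_ideal A) \<noteq> UNIV)"

definition dual_strong_property_A :: "('r::comm_ring_1 \<Rightarrow> 'm::ab_group_add \<Rightarrow> 'm) \<Rightarrow> bool" where
  "dual_strong_property_A scale \<longleftrightarrow>
     (\<forall>A. finite A \<and> A \<noteq> {} \<and> A \<subseteq> W_R scale \<longrightarrow>
        (\<exists>L. completely_irreducible scale L \<and> (\<forall>a\<in>A. range (scale a) \<subseteq> L)))"

end

theory Submission
  imports Defs
begin

text \<open>If every \<open>s \<notin> W(M)\<close> is a unit, every proper ideal consists of non-units and so
  lies in \<open>W(M)\<close>, while an ideal inside \<open>W(M)\<close> is proper because \<open>1 \<notin> W(M)\<close>; this gives (a).
  If some non-unit \<open>s\<close> has \<open>sM = M\<close>, then \<open>(s a)M = aM\<close> for all \<open>a\<close>, and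
  \<open>\<langle>s a\<^sub>1, \<dots>, s a\<^sub>n\<rangle> \<subseteq> Rs\<close> is proper. Were \<open>\<langle>a\<^sub>1, \<dots>, a\<^sub>n\<rangle> = R\<close>, this ideal would contain \<open>s\<close>,
  and the dual proper strong property would give \<open>M = sM \<subseteq> \<langle>s a\<^sub>i\<rangle>M \<noteq> M\<close>. So ideals generated
  by elements of \<open>W(M)\<close> are automatically proper, and Zorn's lemma puts a completely irreducible
  submodule above the proper submodule \<open>IM\<close>; this gives (b).\<close>

interpretation ideal: module "(*) :: 'a::comm_ring_1 \<Rightarrow> 'a \<Rightarrow> 'a"
  by unfold_locales (auto simp: algebra_simps)

lemma gen_ideal_superset: "A \<subseteq> gen_ideal A"
  unfolding gen_ideal_def by (rule ideal.span_superset)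

lemma gen_ideal_insert_zero: "gen_ideal (insert 0 A) = gen_ideal A"
  unfolding gen_ideal_def ideal.span_eq
  by (auto intro: ideal.span_zero ideal.span_base ideal.span_superset[THEN subsetD])

lemma gen_ideal_eq_UNIV_if_unit:
  assumes "u \<in> gen_ideal A" and "u dvd 1"
  shows "gen_ideal A = UNIV"
proof -
  from \<open>u dvd 1\<close> obtain v where "1 = u * v" by (rule dvdE)
  then have "x = (x * v) * u" for x :: 'a by (simp add: ac_simps)
  with assms(1) show ?thesis
    unfolding gen_ideal_def by (metis UNIV_eq_I ideal.span_scale)
qed

lemma gen_ideal_image_mult: "gen_ideal ((*) s ` A) = (*) s ` gen_ideal A"
proof -
  interpret module_hom "(*)" "(*)" "(*) s"
    by (rule ideal.module_hom_scale_self)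
  show ?thesis unfolding gen_ideal_def by (rule span_image)
qed

context module
begin

lemma range_scale_mult: "range (scale (a * b)) = scale a ` range (scale b)"
  by (auto simp flip: scale_scale)

lemma one_notin_W_R: "1 \<notin> W_R scale"
  by (simp add: W_R_def)

lemma range_scale_subset_ideal_mult: "a \<in> I \<Longrightarrow> range (scale a) \<subseteq> ideal_mult scale I"
  unfolding ideal_mult_def by (blast intro: span_base)

lemma subspace_colon_ideal:
  assumes "subspace L"
  shows "ideal.subspace {a. range (scale a) \<subseteq> L}"
proof -
  have "{a. range (scale a) \<subseteq> L} = (\<Inter>m. (\<lambda>a. a *s m) -` L)" by auto
  moreover have "ideal.subspace ((\<lambda>a. a *s m) -` L)" for m
    using module_hom.subspace_vimage[OF module_hom_scale_left assms] .
  ultimately show ?thesis by (auto intro: ideal.subspace_Inter)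
qed

lemma ideal_mult_gen_ideal_subset_iff:
  assumes "subspace L"
  shows "ideal_mult scale (gen_ideal A) \<subseteq> L \<longleftrightarrow> (\<forall>a\<in>A. range (scale a) \<subseteq> L)"
proof
  assume "ideal_mult scale (gen_ideal A) \<subseteq> L"
  then show "\<forall>a\<in>A. range (scale a) \<subseteq> L"
    using gen_ideal_superset range_scale_subset_ideal_mult by blast
next
  assume "\<forall>a\<in>A. range (scale a) \<subseteq> L"
  then have "gen_ideal A \<subseteq> {a. range (scale a) \<subseteq> L}"
    unfolding gen_ideal_def
    by (intro ideal.span_minimal subspace_colon_ideal assms) blast
  then show "ideal_mult scale (gen_ideal A) \<subseteq> L"
    unfolding ideal_mult_def by (intro span_minimal assms) blast
qed

lemma subspace_Union_chain:
  assumes "C \<noteq> {}" and "\<forall>X\<in>C. subspace X" and "\<forall>X\<in>C. \<forall>Y\<in>C. X \<subseteq> Y \<or> Y \<subseteq> X"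
  shows "subspace (\<Union>C)"
proof (rule subspaceI)
  show "0 \<in> \<Union>C" using assms(1,2) subspace_0 by blast
next
  fix x y assume "x \<in> \<Union>C" "y \<in> \<Union>C"
  then obtain X Y where "X \<in> C" "Y \<in> C" "x \<in> X" "y \<in> Y" by blast
  with assms(2,3) show "x + y \<in> \<Union>C" by (metis UnionI subsetD subspace_add)
next
  fix c x assume "x \<in> \<Union>C"
  with assms(2) show "c *s x \<in> \<Union>C" by (blast intro: subspace_scale)
qed

lemma completely_irreducible_if_maximal_avoiding:
  assumes L: "subspace L" "m \<notin> L"
    and maximal: "\<And>X. subspace X \<Longrightarrow> L \<subset> X \<Longrightarrow> m \<in> X"
  shows "completely_irreducible scale L"
  unfolding completely_irreducible_def
proof (intro conjI allI impI)
  show "subspace L" "L \<noteq> UNIV" using L by auto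
  fix F assume F: "(\<forall>X\<in>F. subspace X) \<and> L = \<Inter>F"
  show "L \<in> F"
  proof (rule ccontr)
    assume "L \<notin> F"
    with F maximal have "m \<in> \<Inter>F" by blast
    with F L show False by blast
  qed
qed

lemma completely_irreducible_superset:
  assumes "subspace N" and "N \<noteq> UNIV"
  obtains L where "completely_irreducible scale L" and "N \<subseteq> L"
proof -
  from assms(2) obtain m where m: "m \<notin> N" by blast
  define \<A> where "\<A> = {L. subspace L \<and> N \<subseteq> L \<and> m \<notin> L}"
  have "\<exists>L\<in>\<A>. \<forall>X\<in>\<A>. L \<subseteq> X \<longrightarrow> X = L"
  proof (rule subset_Zorn_nonempty)
    show "\<A> \<noteq> {}" using assms(1) m unfolding \<A>_def by blast
    fix C assume "C \<noteq> {}" and "subset.chain \<A> C"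
    then show "\<Union>C \<in> \<A>"
      unfolding \<A>_def subset_chain_def using subspace_Union_chain[of C] by blast
  qed
  then obtain L where "L \<in> \<A>" and "\<forall>X\<in>\<A>. L \<subseteq> X \<longrightarrow> X = L" by blast
  then have "completely_irreducible scale L"
    by (intro completely_irreducible_if_maximal_avoiding[of L m]) (auto simp: \<A>_def)
  with \<open>L \<in> \<A>\<close> show ?thesis using that unfolding \<A>_def by blast
qed

lemma dual_proper_strong_imp_dual_property_A:
  assumes "dual_proper_strong_property_A scale"
  shows "dual_property_A scale"
  unfolding dual_property_A_def
proof (intro allI impI)
  fix A assume A: "finite A \<and> gen_ideal A \<subseteq> W_R scale"
  \<comment> \<open>Adjoining the generator \<open>0\<close> covers \<open>A = {}\<close>, which the proper strong version excludes.\<close>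
  have "insert 0 A \<subseteq> W_R scale"
    using A gen_ideal_superset[of "insert 0 A"] unfolding gen_ideal_insert_zero by blast
  moreover have "gen_ideal (insert 0 A) \<noteq> UNIV"
    using A one_notin_W_R by (auto simp: gen_ideal_insert_zero)
  ultimately have "ideal_mult scale (gen_ideal (insert 0 A)) \<noteq> UNIV"
    using A assms unfolding dual_proper_strong_property_A_def by blast
  then show "ideal_mult scale (gen_ideal A) \<noteq> UNIV" by (simp add: gen_ideal_insert_zero)
qed

lemma dual_property_A_imp_dual_proper_strong:
  assumes units: "\<And>s. s \<notin> W_R scale \<Longrightarrow> s dvd 1"
    and "dual_property_A scale"
  shows "dual_proper_strong_property_A scale"
  unfolding dual_proper_strong_property_A_def
proof (intro allI impI)
  fix A assume A: "finite A \<and> A \<noteq> {} \<and> A \<subseteq> W_R scale \<and> gen_ideal A \<noteq> UNIV"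
  then have "gen_ideal A \<subseteq> W_R scale"
    using units gen_ideal_eq_UNIV_if_unit by blast
  with A assms(2) show "ideal_mult scale (gen_ideal A) \<noteq> UNIV"
    unfolding dual_property_A_def by blast
qed

lemma dual_strong_imp_dual_proper_strong:
  assumes "dual_strong_property_A scale"
  shows "dual_proper_strong_property_A scale"
  unfolding dual_proper_strong_property_A_def
proof (intro allI impI)
  fix A assume A: "finite A \<and> A \<noteq> {} \<and> A \<subseteq> W_R scale \<and> gen_ideal A \<noteq> UNIV"
  then have "\<exists>L. completely_irreducible scale L \<and> (\<forall>a\<in>A. range (scale a) \<subseteq> L)"
    using assms unfolding dual_strong_property_A_def by blast
  then obtain L where L: "completely_irreducible scale L" "\<forall>a\<in>A. range (scale a) \<subseteq> L"
    by blast
  then have "subspace L" "L \<noteq> UNIV" by (auto simp: completely_irreducible_def)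
  with L(2) show "ideal_mult scale (gen_ideal A) \<noteq> UNIV"
    using ideal_mult_gen_ideal_subset_iff by blast
qed

lemma gen_ideal_ne_UNIV_if_dual_proper_strong:
  assumes "dual_proper_strong_property_A scale"
    and s: "s \<notin> W_R scale" "\<not> s dvd 1"
    and A: "finite A" "A \<noteq> {}" "A \<subseteq> W_R scale"
  shows "gen_ideal A \<noteq> UNIV"
proof
  assume "gen_ideal A = UNIV"
  have surj: "range (scale s) = UNIV" using s(1) by (simp add: W_R_def)
  then have "range (scale (s * a)) = range (scale a)" for a
    by (simp add: range_scale_mult mult.commute[of s])
  then have "(*) s ` A \<subseteq> W_R scale" using A(3) by (auto simp: W_R_def)
  moreover have "gen_ideal ((*) s ` A) \<noteq> UNIV"
    using s(2) unfolding gen_ideal_image_mult by (metis UNIV_I dvdI imageE)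
  ultimately have proper: "ideal_mult scale (gen_ideal ((*) s ` A)) \<noteq> UNIV"
    using assms(1) A unfolding dual_proper_strong_property_A_def by blast
  have "s \<in> gen_ideal ((*) s ` A)"
    using \<open>gen_ideal A = UNIV\<close> unfolding gen_ideal_image_mult
    by (metis UNIV_I image_eqI mult_1_right)
  then have "range (scale s) \<subseteq> ideal_mult scale (gen_ideal ((*) s ` A))"
    by (rule range_scale_subset_ideal_mult)
  with surj proper show False by blast
qed

lemma dual_proper_strong_imp_dual_strong:
  assumes "dual_proper_strong_property_A scale"
    and "s \<notin> W_R scale" "\<not> s dvd 1"
  shows "dual_strong_property_A scale"
  unfolding dual_strong_property_A_def
proof (intro allI impI)
  fix A assume A: "finite A \<and> A \<noteq> {} \<and> A \<subseteq> W_R scale"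
  then have "gen_ideal A \<noteq> UNIV"
    using gen_ideal_ne_UNIV_if_dual_proper_strong assms by blast
  with A assms(1) have "ideal_mult scale (gen_ideal A) \<noteq> UNIV"
    unfolding dual_proper_strong_property_A_def by blast
  then obtain L where "completely_irreducible scale L" "ideal_mult scale (gen_ideal A) \<subseteq> L"
    using completely_irreducible_superset[of "ideal_mult scale (gen_ideal A)"]
    by (auto simp: ideal_mult_def)
  moreover from this have "subspace L" by (simp add: completely_irreducible_def)
  ultimately show "\<exists>L. completely_irreducible scale L \<and> (\<forall>a\<in>A. range (scale a) \<subseteq> L)"
    using ideal_mult_gen_ideal_subset_iff by blast
qed

end

theorem theorem3p8:
  fixes scale :: "'r::comm_ring_1 \<Rightarrow> 'm::ab_group_add \<Rightarrow> 'm"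
  assumes "module scale"
  defines "S \<equiv> UNIV - W_R scale"
  shows "((\<forall>s\<in>S. s dvd 1) \<longrightarrow>
            (dual_proper_strong_property_A scale \<longleftrightarrow> dual_property_A scale))
       \<and> (\<not> (\<forall>s\<in>S. s dvd 1) \<longrightarrow>
            (dual_proper_strong_property_A scale \<longleftrightarrow> dual_strong_property_A scale))"
proof (intro conjI impI)
  interpret module scale by fact
  show "dual_proper_strong_property_A scale \<longleftrightarrow> dual_property_A scale"
    if "\<forall>s\<in>S. s dvd 1"
    using that dual_proper_strong_imp_dual_property_A dual_property_A_imp_dual_proper_strong
    unfolding S_def by blast
  show "dual_proper_strong_property_A scale \<longleftrightarrow> dual_strong_property_A scale"
    if "\<not> (\<forall>s\<in>S. s dvd 1)"
    using that dual_proper_strong_imp_dual_strong dual_strong_imp_dual_proper_strong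
    unfolding S_def by blast
qed

end
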